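(* Let $q$ be a prime power, let $k\ge1$, $n=2k$, and let $t\ge0$ be an even integer. Let $\delta\in\mathbb{F}_{q^n}$ satisfy $\delta^{q^k}=-\delta$, and let $L(x)=\sum_i a_i x^{q^i}$ be a $q$-polynomial with all coefficients $a_i\in\mathbb{F}_{q^k}$. Then $f(x)=(x^{q^k}-x+\delta)^t+L(x)$ is a permutation polynomial of $\mathbb{F}_{q^n}$ if and only if $L(x)$ is a permutation polynomial of $\mathbb{F}_{q^n}$.
   Context: A polynomial is a permutation polynomial of $\mathbb{F}_{q^n}$ if it induces a bijection of $\mathbb{F}_{q^n}$. *)

theory Defs
  imports "HOL-Number_Theory.Number_Theory"
begin

definition q_poly :: "nat \<Rightarrow> nat \<Rightarrow> (nat \<Rightarrow> 'a::comm_ring_1) \<Rightarrow> 'a \<Rightarrow> 'a" where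
  "q_poly q m a x = (\<Sum>i<m. a i * x ^ (q ^ i))"

definition is_perm :: "('a \<Rightarrow> 'a) \<Rightarrow> bool" where
  "is_perm f \<longleftrightarrow> bij f"

end

theory Submission
  imports Defs
begin

text \<open>
  Let \<open>s x = x ^ q ^ k\<close>, the Frobenius of GF(q^n) over GF(q^k), and
  \<open>g x = s x - x\<close>. Both \<open>s\<close> and \<open>L\<close> are additive, and \<open>s\<close> commutes with \<open>L\<close> because
  it fixes the coefficients of \<open>L\<close>; hence \<open>g \<circ> L = L \<circ> g\<close>. As \<open>s\<close> is an involution and
  \<open>s \<delta> = -\<delta>\<close>, we get \<open>s (g x + \<delta>) = -(g x + \<delta>)\<close>, so for even \<open>t\<close> the term
  \<open>(g x + \<delta>) ^ t\<close> is fixed by \<open>s\<close>, i.e. killed by \<open>g\<close>. Therefore \<open>g \<circ> f = L \<circ> g\<close>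
  for \<open>f x = (g x + \<delta>) ^ t + L x\<close>, and comparing the sizes of \<open>range g\<close> and its image
  under \<open>L\<close> shows that \<open>f\<close> is injective iff \<open>L\<close> is.
\<close>

lemma bij_plus_additive_iff:
  fixes L g H :: "'a::{finite,ab_group_add} \<Rightarrow> 'a"
  assumes "additive L" "additive g"
    and g_L: "\<And>x. g (L x) = L (g x)"
    and g_H: "\<And>x. g (H (g x)) = 0"
  shows "bij (\<lambda>x. H (g x) + L x) \<longleftrightarrow> bij L"
proof -
  define f where "f x = H (g x) + L x" for x
  have g_f: "g (f x) = L (g x)" for x
    unfolding f_def using g_L g_H additive.add[OF assms(2)] by simp
  have "inj f \<longleftrightarrow> inj L"
  proof
    assume "inj f"
    have "L ` range g = g ` range f"
      using g_f by (auto simp: image_image)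
    also have "range f = UNIV"
      using \<open>inj f\<close> finite_UNIV_inj_surj[OF finite] by blast
    finally have "inj_on L (range g)"
      by (intro eq_card_imp_inj_on) auto
    show "inj L"
    proof (rule injI)
      fix x y assume "L x = L y"
      then have "L (x - y) = 0"
        by (simp add: additive.diff[OF assms(1)])
      then have "L (g (x - y)) = L (g 0)"
        using g_L additive.zero[OF assms(1)] additive.zero[OF assms(2)] by metis
      then have "g (x - y) = g 0"
        using \<open>inj_on L (range g)\<close> by (auto dest: inj_onD)
      then have "f x = f y"
        using \<open>L x = L y\<close> additive.diff[OF assms(2), of x y] additive.zero[OF assms(2)]
        unfolding f_def by simp
      then show "x = y"
        using \<open>inj f\<close> by (simp add: inj_eq)
    qed
  next
    assume "inj L"
    show "inj f"
    proof (rule injI)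
      fix x y assume "f x = f y"
      then have "g x = g y"
        using g_f \<open>inj L\<close> by (metis injD)
      with \<open>f x = f y\<close> have "L x = L y"
        unfolding f_def by simp
      then show "x = y"
        using \<open>inj L\<close> by (simp add: inj_eq)
    qed
  qed
  then show ?thesis
    unfolding f_def bij_def using finite_UNIV_inj_surj[OF finite] by blast
qed

text \<open>
  The library's \<open>finite_field_power_card_eq_same\<close> needs the sort \<open>finite_field\<close>,
  which a type variable of sort \<open>{finite,field}\<close> does not carry.
\<close>
lemma power_card_eq_self:
  fixes x :: "'a::{finite,field}"
  shows "x ^ card (UNIV :: 'a set) = x"
proof (cases "x = 0")
  case True
  then show ?thesis
    using finite_UNIV_card_ge_0[OF finite] by simp
next
  case False
  let ?U = "UNIV - {0 :: 'a}"
  have "bij_betw ((*) x) ?U ?U"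
    by (rule bij_betw_byWitness[where f' = "\<lambda>y. y / x"]) (use False in auto)
  then have "(\<Prod>y\<in>?U. x * y) = \<Prod>?U"
    by (rule prod.reindex_bij_betw)
  moreover have "(\<Prod>y\<in>?U. x * y) = x ^ card ?U * \<Prod>?U"
    by (simp add: prod.distrib)
  moreover have "\<Prod>?U \<noteq> 0"
    by (simp add: prod_zero_iff)
  ultimately have "x ^ card ?U = 1"
    by (metis mult_cancel_right1)
  moreover have "card (UNIV :: 'a set) = Suc (card ?U)"
    using card_Suc_Diff1[OF finite, of "0::'a"] by simp
  ultimately show ?thesis
    by (metis power_Suc mult_1_right)
qed

lemma power_power_eq_self_of_card_square:
  fixes x :: "'a::{finite,field}"
  assumes "card (UNIV :: 'a set) = r * r"
  shows "(x ^ r) ^ r = x"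
  using power_card_eq_self[of x] assms by (simp flip: power_mult)

lemma CHAR_power_eq_primepow_card:
  assumes "primepow q" "card (UNIV :: 'a::{finite,field} set) = q ^ n"
  obtains e where "q = CHAR('a) ^ e"
proof -
  obtain p e where p: "prime p" "q = p ^ e"
    using assms(1) unfolding primepow_def by blast
  have "prime CHAR('a)"
    using prime_CHAR_semidom finite_imp_CHAR_pos[OF finite] by blast
  moreover have "CHAR('a) dvd p ^ (e * n)"
    using CHAR_dvd_CARD[where 'a = 'a] assms(2) p(2) by (simp add: power_mult)
  ultimately have "CHAR('a) = p"
    using p(1) by (metis prime_dvd_power primes_dvd_imp_eq)
  with p(2) show ?thesis
    using that by blast
qed

lemma additive_power_CHAR_power:
  assumes "prime CHAR('a::comm_ring_1)"
  shows "additive (\<lambda>x :: 'a. x ^ CHAR('a) ^ e)"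
  by standard (rule freshmans_dream'[OF assms refl])

lemma additive_q_poly:
  assumes "prime CHAR('a::comm_ring_1)" "q = CHAR('a) ^ e"
  shows "additive (q_poly q m (a :: nat \<Rightarrow> 'a))"
proof
  fix x y :: 'a
  have "(x + y) ^ q ^ i = x ^ q ^ i + y ^ q ^ i" for i
    using additive.add[OF additive_power_CHAR_power[OF assms(1), of "e * i"]] assms(2)
    by (simp add: power_mult)
  then show "q_poly q m a (x + y) = q_poly q m a x + q_poly q m a y"
    unfolding q_poly_def by (simp add: distrib_left sum.distrib)
qed

lemma q_poly_power_CHAR_power_commute:
  assumes "prime CHAR('a::comm_ring_1)" "r = CHAR('a) ^ j"
    and "\<forall>i<m. a i ^ r = a i"
  shows "q_poly q m a x ^ r = q_poly q m a (x ^ r :: 'a)"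
proof -
  have "q_poly q m a x ^ r = (\<Sum>i<m. (a i * x ^ q ^ i) ^ r)"
    unfolding q_poly_def by (rule freshmans_dream_sum'[OF assms(1,2)])
  also have "\<dots> = (\<Sum>i<m. a i * (x ^ r) ^ q ^ i)"
    using assms(3)
    by (intro sum.cong) (simp_all add: power_mult_distrib mult.commute flip: power_mult)
  finally show ?thesis
    unfolding q_poly_def .
qed

lemma even_power_fixed_of_power_eq_minus:
  fixes y :: "'a::comm_ring_1"
  assumes "y ^ r = - y" "even t"
  shows "(y ^ t) ^ r = y ^ t"
proof -
  have "(y ^ t) ^ r = (- y) ^ t"
    using assms(1) by (metis power_mult mult.commute)
  then show ?thesis
    using power_minus_even[OF assms(2)] by simp
qed

theorem mainTheorem3:
  fixes q k t m :: nat and \<delta> :: "'a::{finite,field}" and a :: "nat \<Rightarrow> 'a"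
  assumes "primepow q"
    and "k \<ge> 1"
    and "card (UNIV :: 'a set) = q ^ (2 * k)"
    and "even t"
    and "\<delta> ^ (q ^ k) = - \<delta>"
    and "\<forall>i<m. a i ^ (q ^ k) = a i"
  shows "is_perm (\<lambda>x. (x ^ (q ^ k) - x + \<delta>) ^ t + q_poly q m a x)
     \<longleftrightarrow> is_perm (q_poly q m a)"
proof -
  obtain e where q: "q = CHAR('a) ^ e"
    using CHAR_power_eq_primepow_card assms(1,3) .
  have char: "prime CHAR('a)"
    using prime_CHAR_semidom finite_imp_CHAR_pos[OF finite] by blast
  have qk: "q ^ k = CHAR('a) ^ (e * k)"
    unfolding q by (simp add: power_mult)
  define s :: "'a \<Rightarrow> 'a" where "s x = x ^ q ^ k" for x
  define g where "g x = s x - x" for x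
  define L where "L = q_poly q m a"
  have "additive L"
    unfolding L_def by (rule additive_q_poly[OF char q])
  have "additive s"
    unfolding s_def qk by (rule additive_power_CHAR_power[OF char])
  have s_s: "s (s x) = x" for x
    unfolding s_def
    by (rule power_power_eq_self_of_card_square) (simp add: assms(3) mult_2 power_add)
  have "additive g"
    by standard (simp add: g_def additive.add[OF \<open>additive s\<close>])
  have g_L: "g (L x) = L (g x)" for x
    using q_poly_power_CHAR_power_commute[OF char qk assms(6)]
      additive.diff[OF \<open>additive L\<close>]
    by (simp add: g_def s_def L_def)
  have s_anti: "s (g x + \<delta>) = - (g x + \<delta>)" for x
    using s_s assms(5) additive.add[OF \<open>additive s\<close>] additive.diff[OF \<open>additive s\<close>]
    by (simp add: g_def s_def[symmetric])
  have g_H: "g ((g x + \<delta>) ^ t) = 0" for x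
    using even_power_fixed_of_power_eq_minus[OF s_anti[of x, unfolded s_def] assms(4)]
    unfolding g_def[of "(g x + \<delta>) ^ t"] s_def[of "(g x + \<delta>) ^ t"] by simp
  have "bij (\<lambda>x. (g x + \<delta>) ^ t + L x) \<longleftrightarrow> bij L"
    using bij_plus_additive_iff[OF \<open>additive L\<close> \<open>additive g\<close> g_L, of "\<lambda>y. (y + \<delta>) ^ t"] g_H
    by simp
  then show ?thesis
    unfolding is_perm_def L_def g_def s_def .
qed

end
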